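(* For every $(w_1,w_2)\in\mathcal A$, with $c_i=c_i(w_1,w_2)$, $$e^{c_i}\int_\Omega e^{u_i^0+w_i}\,dx\le|\Omega|\quad\text{and}\quad e^{c_i}\le1,\qquad i=1,2.$$
   Context: Standing setting (doubly periodic case): $N\ge2$ integer, $\kappa>1$, $\lambda>0$; $\Omega$ a doubly periodic domain (flat torus) of area $|\Omega|$; integers $n_1,n_2\ge0$ and points $p_{is}\in\Omega$. $\dot W^{1,2}(\Omega)=\{w\in W^{1,2}(\Omega):\int_\Omega w=0\}$ (periodic functions). $u_i^0$ solves $\Delta u_i^0=4\pi\sum_{s=1}^{n_i}\delta_{p_{is}}-\frac{4\pi n_i}{|\Omega|}$, $\int_\Omega u_i^0=0$. $b_1=\frac{4\pi((1+(N-1)\kappa)n_1+(\kappa-1)n_2)}{\kappa}$, $b_2=\frac{4\pi((N-1)(\kappa-1)n_1+(N-1+\kappa)n_2)}{(N-1)\kappa}$. $\mathcal A$ is the set of $(w_1,w_2)\in\dot W^{1,2}(\Omega)^2$ with $(\int_\Omega e^{u_1^0+w_1})^2\ge\frac{4(N-1+\kappa)b_1}{N^2\lambda}\int_\Omega e^{2u_1^0+2w_1}$ and $(\int_\Omega e^{u_2^0+w_2})^2\ge\frac{4(N-1)(1+(N-1)\kappa)b_2}{N^2\lambda}\int_\Omega e^{2u_2^0+2w_2}$. For $(w_1,w_2)\in\mathcal A$, $(c_1(w_1,w_2),c_2(w_1,w_2))$ is the unique pair of reals such that $e^{c_1}=f_1(e^{c_2})$, $e^{c_2}=f_2(e^{c_1})$,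 where with $E_{12}=\int_\Omega e^{u_1^0+u_2^0+w_1+w_2}$, $P_1(Y)=N\int_\Omega e^{u_1^0+w_1}+(\kappa-1)YE_{12}$, $P_2(X)=\frac N{N-1}\int_\Omega e^{u_2^0+w_2}+(\kappa-1)XE_{12}$, $f_1(Y)=\frac{P_1(Y)+\sqrt{P_1(Y)^2-\frac{4(N-1+\kappa)b_1}{\lambda}\int e^{2u_1^0+2w_1}}}{2(N-1+\kappa)\int e^{2u_1^0+2w_1}}$, $f_2(X)=\frac{P_2(X)+\sqrt{P_2(X)^2-\frac{4(1+(N-1)\kappa)b_2}{(N-1)\lambda}\int e^{2u_2^0+2w_2}}}{2(\frac1{N-1}+\kappa)\int e^{2u_2^0+2w_2}}$ (this pair exists and is unique). *)

theory Defs
  imports "HOL-Analysis.Analysis"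
begin

text \<open>The flat torus is modelled as the plane modulo the lattice generated by two
linearly independent vectors om1 om2; functions on the torus are lattice-periodic
functions on the plane, and integrals over the torus are Lebesgue integrals over
the fundamental parallelogram.\<close>

definition lattice_basis :: "real \<times> real \<Rightarrow> real \<times> real \<Rightarrow> bool" where
  "lattice_basis om1 om2 \<longleftrightarrow> fst om1 * snd om2 - snd om1 * fst om2 \<noteq> 0"

definition periodic2 :: "real \<times> real \<Rightarrow> real \<times> real \<Rightarrow> (real \<times> real \<Rightarrow> 'b) \<Rightarrow> bool" where
  "periodic2 om1 om2 f \<longleftrightarrow> (\<forall>x. f (x + om1) = f x \<and> f (x + om2) = f x)"

definition fund_dom :: "real \<times> real \<Rightarrow> real \<times> real \<Rightarrow> (real \<times> real) set" where
  "fund_dom om1 om2 = {s *\<^sub>R om1 + t *\<^sub>R om2 | s t. 0 \<le> s \<and> s < 1 \<and> 0 \<le> t \<and> t < 1}"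

definition tint :: "real \<times> real \<Rightarrow> real \<times> real \<Rightarrow> (real \<times> real \<Rightarrow> real) \<Rightarrow> real" where
  "tint om1 om2 f = integral\<^sup>L (lebesgue_on (fund_dom om1 om2)) f"

definition tarea :: "real \<times> real \<Rightarrow> real \<times> real \<Rightarrow> real" where
  "tarea om1 om2 = measure lebesgue (fund_dom om1 om2)"

definition tL1 :: "real \<times> real \<Rightarrow> real \<times> real \<Rightarrow> (real \<times> real \<Rightarrow> real) \<Rightarrow> bool" where
  "tL1 om1 om2 f \<longleftrightarrow> integrable (lebesgue_on (fund_dom om1 om2)) f"

definition tL2 :: "real \<times> real \<Rightarrow> real \<times> real \<Rightarrow> (real \<times> real \<Rightarrow> real) \<Rightarrow> bool" where
  "tL2 om1 om2 f \<longleftrightarrow> f \<in> borel_measurable (lebesgue_on (fund_dom om1 om2)) \<and>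
     integrable (lebesgue_on (fund_dom om1 om2)) (\<lambda>x. (f x)\<^sup>2)"

text \<open>Partial derivatives (True = first coordinate, False = second coordinate).\<close>
definition pd :: "bool \<Rightarrow> (real \<times> real \<Rightarrow> real) \<Rightarrow> real \<times> real \<Rightarrow> real" where
  "pd d f z = (if d then deriv (\<lambda>t. f (t, snd z)) (fst z) else deriv (\<lambda>t. f (fst z, t)) (snd z))"

fun iter_pd :: "bool list \<Rightarrow> (real \<times> real \<Rightarrow> real) \<Rightarrow> real \<times> real \<Rightarrow> real" where
  "iter_pd [] f = f"
| "iter_pd (d # ds) f = pd d (iter_pd ds f)"

definition smooth2 :: "(real \<times> real \<Rightarrow> real) \<Rightarrow> bool" where
  "smooth2 f \<longleftrightarrow> (\<forall>ds. continuous_on UNIV (iter_pd ds f) \<and>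
      (\<forall>z. (\<lambda>t. iter_pd ds f (t, snd z)) differentiable (at (fst z)) \<and>
           (\<lambda>t. iter_pd ds f (fst z, t)) differentiable (at (snd z))))"

definition laplacian :: "(real \<times> real \<Rightarrow> real) \<Rightarrow> real \<times> real \<Rightarrow> real" where
  "laplacian f z = pd True (pd True f) z + pd False (pd False f) z"

definition test_fun :: "real \<times> real \<Rightarrow> real \<times> real \<Rightarrow> (real \<times> real \<Rightarrow> real) \<Rightarrow> bool" where
  "test_fun om1 om2 \<phi> \<longleftrightarrow> smooth2 \<phi> \<and> periodic2 om1 om2 \<phi>"

definition W12 :: "real \<times> real \<Rightarrow> real \<times> real \<Rightarrow> (real \<times> real \<Rightarrow> real) \<Rightarrow> bool" where
  "W12 om1 om2 w \<longleftrightarrow> periodic2 om1 om2 w \<and> tL2 om1 om2 w \<and>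
     (\<exists>g1 g2. periodic2 om1 om2 g1 \<and> periodic2 om1 om2 g2 \<and> tL2 om1 om2 g1 \<and> tL2 om1 om2 g2 \<and>
        (\<forall>\<phi>. test_fun om1 om2 \<phi> \<longrightarrow>
           tint om1 om2 (\<lambda>x. w x * pd True \<phi> x) = - tint om1 om2 (\<lambda>x. g1 x * \<phi> x) \<and>
           tint om1 om2 (\<lambda>x. w x * pd False \<phi> x) = - tint om1 om2 (\<lambda>x. g2 x * \<phi> x)))"

definition dotW12 :: "real \<times> real \<Rightarrow> real \<times> real \<Rightarrow> (real \<times> real \<Rightarrow> real) \<Rightarrow> bool" where
  "dotW12 om1 om2 w \<longleftrightarrow> W12 om1 om2 w \<and> tint om1 om2 w = 0"

text \<open>u is the mean-zero distributional solution on the torus of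
  Delta u = 4 pi sum_{s=1}^n delta_{p s} - 4 pi n / |Omega|.\<close>
definition vortex_potential :: "real \<times> real \<Rightarrow> real \<times> real \<Rightarrow> nat \<Rightarrow> (nat \<Rightarrow> real \<times> real)
    \<Rightarrow> (real \<times> real \<Rightarrow> real) \<Rightarrow> bool" where
  "vortex_potential om1 om2 n p u \<longleftrightarrow> periodic2 om1 om2 u \<and> tL1 om1 om2 u \<and>
     tint om1 om2 u = 0 \<and>
     (\<forall>\<phi>. test_fun om1 om2 \<phi> \<longrightarrow>
        tint om1 om2 (\<lambda>x. u x * laplacian \<phi> x) =
          4 * pi * (\<Sum>s\<in>{1..n}. \<phi> (p s)) - 4 * pi * real n / tarea om1 om2 * tint om1 om2 \<phi>)"

definition bb1 :: "nat \<Rightarrow> real \<Rightarrow> nat \<Rightarrow> nat \<Rightarrow> real" where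
  "bb1 N \<kappa> n1 n2 = 4 * pi * ((1 + (real N - 1) * \<kappa>) * real n1 + (\<kappa> - 1) * real n2) / \<kappa>"

definition bb2 :: "nat \<Rightarrow> real \<Rightarrow> nat \<Rightarrow> nat \<Rightarrow> real" where
  "bb2 N \<kappa> n1 n2 = 4 * pi * ((real N - 1) * (\<kappa> - 1) * real n1 + (real N - 1 + \<kappa>) * real n2)
      / ((real N - 1) * \<kappa>)"

text \<open>f1 and f2 in terms of I_i = int e^{u_i^0+w_i}, J_i = int e^{2u_i^0+2w_i}, E = E_12.\<close>
definition ff1 :: "nat \<Rightarrow> real \<Rightarrow> real \<Rightarrow> real \<Rightarrow> real \<Rightarrow> real \<Rightarrow> real \<Rightarrow> real \<Rightarrow> real" where
  "ff1 N \<kappa> lam b I J E Y =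
     (let P = real N * I + (\<kappa> - 1) * Y * E
      in (P + sqrt (P\<^sup>2 - 4 * (real N - 1 + \<kappa>) * b / lam * J)) / (2 * (real N - 1 + \<kappa>) * J))"

definition ff2 :: "nat \<Rightarrow> real \<Rightarrow> real \<Rightarrow> real \<Rightarrow> real \<Rightarrow> real \<Rightarrow> real \<Rightarrow> real \<Rightarrow> real" where
  "ff2 N \<kappa> lam b I J E X =
     (let P = real N / (real N - 1) * I + (\<kappa> - 1) * X * E
      in (P + sqrt (P\<^sup>2 - 4 * (1 + (real N - 1) * \<kappa>) * b / ((real N - 1) * lam) * J))
           / (2 * (1 / (real N - 1) + \<kappa>) * J))"

end

theory Submission
  imports Defs
begin

text \<open>Write I_i, J_i for the integrals of e^(u_i^0+w_i) and e^(2u_i^0+2w_i). Since e^t \<ge> 1 + t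
and u_i^0, w_i have mean zero, J_i \<ge> |Omega|; Cauchy-Schwarz gives I_i^2 \<le> |Omega| J_i and
E_12^2 \<le> J_1 J_2. Dropping the square root in f_1, f_2 leaves two linear inequalities which,
after dividing by sqrt J_i, say for p = e^c_1 sqrt J_1 - sqrt |Omega| and
q = e^c_2 sqrt J_2 - sqrt |Omega| that (N-1+kappa) p \<le> (kappa-1) q and
(1+(N-1)kappa) q \<le> (N-1)(kappa-1) p. The coefficient determinant is kappa N^2 > 0, so p, q \<le> 0,
and e^c_i sqrt J_i \<le> sqrt |Omega| yields both e^c_i \<le> 1 and e^c_i I_i \<le> |Omega|.\<close>

definition lattice_coords :: "real \<times> real \<Rightarrow> real \<times> real \<Rightarrow> real \<times> real \<Rightarrow> real \<times> real" where
  "lattice_coords om1 om2 x =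
     (let d = fst om1 * snd om2 - snd om1 * fst om2
      in ((fst x * snd om2 - snd x * fst om2) / d, (fst om1 * snd x - snd om1 * fst x) / d))"

lemma lattice_coords_combination:
  assumes "lattice_basis om1 om2"
  shows "lattice_coords om1 om2 (s *\<^sub>R om1 + t *\<^sub>R om2) = (s, t)"
  using assms by (simp add: lattice_coords_def lattice_basis_def Let_def field_simps)

lemma combination_lattice_coords:
  assumes "lattice_basis om1 om2"
  shows "fst (lattice_coords om1 om2 x) *\<^sub>R om1 + snd (lattice_coords om1 om2 x) *\<^sub>R om2 = x"
proof -
  obtain a b c d y z where om: "om1 = (a, b)" "om2 = (c, d)" "x = (y, z)"
    by (metis prod.collapse)
  define D where "D = a * d - b * c"
  have "D \<noteq> 0"
    using assms by (simp add: lattice_basis_def om D_def)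
  then have "(y * d - z * c) / D * a + (a * z - b * y) / D * c = y"
    and "(y * d - z * c) / D * b + (a * z - b * y) / D * d = z"
    by (simp_all add: field_simps) (simp_all add: D_def algebra_simps)
  then show ?thesis
    by (simp add: lattice_coords_def Let_def om flip: D_def)
qed

lemma fund_dom_eq_vimage:
  assumes "lattice_basis om1 om2"
  shows "fund_dom om1 om2 = lattice_coords om1 om2 -` ({0..<1} \<times> {0..<1})"
  using lattice_coords_combination[OF assms] combination_lattice_coords[OF assms]
  by (auto simp: fund_dom_def) (metis prod.collapse)

lemma continuous_lattice_coords:
  assumes "lattice_basis om1 om2"
  shows "continuous_on UNIV (lattice_coords om1 om2)"
  using assms unfolding lattice_coords_def lattice_basis_def Let_def
  by (intro continuous_intros) auto

lemma fund_dom_lmeasurable: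
  assumes "lattice_basis om1 om2"
  shows "fund_dom om1 om2 \<in> lmeasurable"
proof (rule bounded_set_imp_lmeasurable)
  have "norm (s *\<^sub>R om1 + t *\<^sub>R om2) \<le> norm om1 + norm om2"
    if "0 \<le> s" "s < 1" "0 \<le> t" "t < 1" for s t
    using that norm_triangle_ineq[of "s *\<^sub>R om1" "t *\<^sub>R om2"]
      mult_right_mono[of s 1 "norm om1"] mult_right_mono[of t 1 "norm om2"] by auto
  then show "bounded (fund_dom om1 om2)"
    unfolding bounded_iff fund_dom_def by blast
  have "{0..<1::real} \<times> {0..<1::real} \<in> sets borel"
    unfolding borel_prod[symmetric] by (intro pair_measureI) auto
  then have "lattice_coords om1 om2 -` ({0..<1} \<times> {0..<1}) \<in> sets borel"
    using measurable_sets[OF borel_measurable_continuous_onI[OF continuous_lattice_coords[OF assms]]]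
    by simp
  then show "fund_dom om1 om2 \<in> sets lebesgue"
    unfolding fund_dom_eq_vimage[OF assms] by simp
qed

lemma integrable_mult_of_square_integrable:
  fixes f g :: "'a \<Rightarrow> real"
  assumes "f \<in> borel_measurable M" "g \<in> borel_measurable M"
    and "integrable M (\<lambda>x. (f x)\<^sup>2)" "integrable M (\<lambda>x. (g x)\<^sup>2)"
  shows "integrable M (\<lambda>x. f x * g x)"
proof (rule Bochner_Integration.integrable_bound)
  show "integrable M (\<lambda>x. (f x)\<^sup>2 + (g x)\<^sup>2)"
    using assms(3,4) by simp
  show "(\<lambda>x. f x * g x) \<in> borel_measurable M"
    using assms(1,2) by measurable
  have "\<bar>f x * g x\<bar> \<le> (f x)\<^sup>2 + (g x)\<^sup>2" for x
  proof -
    have "2 * \<bar>f x\<bar> * \<bar>g x\<bar> \<le> (f x)\<^sup>2 + (g x)\<^sup>2"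
      using sum_squares_bound[of "\<bar>f x\<bar>" "\<bar>g x\<bar>"] by simp
    moreover have "0 \<le> \<bar>f x\<bar> * \<bar>g x\<bar>"
      by simp
    ultimately show ?thesis
      unfolding abs_mult by linarith
  qed
  then show "AE x in M. norm (f x * g x) \<le> norm ((f x)\<^sup>2 + (g x)\<^sup>2)"
    by simp
qed

lemma Cauchy_Schwarz_integral:
  fixes f g :: "'a \<Rightarrow> real"
  assumes "f \<in> borel_measurable M" "g \<in> borel_measurable M"
    and f2: "integrable M (\<lambda>x. (f x)\<^sup>2)" and g2: "integrable M (\<lambda>x. (g x)\<^sup>2)"
    and pos: "integral\<^sup>L M (\<lambda>x. (f x)\<^sup>2) > 0"
  shows "(integral\<^sup>L M (\<lambda>x. f x * g x))\<^sup>2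
           \<le> integral\<^sup>L M (\<lambda>x. (f x)\<^sup>2) * integral\<^sup>L M (\<lambda>x. (g x)\<^sup>2)"
proof -
  define F where "F = integral\<^sup>L M (\<lambda>x. (f x)\<^sup>2)"
  define G where "G = integral\<^sup>L M (\<lambda>x. (g x)\<^sup>2)"
  define E where "E = integral\<^sup>L M (\<lambda>x. f x * g x)"
  define t where "t = E / F"
  have fg: "integrable M (\<lambda>x. f x * g x)"
    using assms(1-4) by (rule integrable_mult_of_square_integrable)
  have "0 \<le> integral\<^sup>L M (\<lambda>x. (t * f x - g x)\<^sup>2)"
    by simp
  also have "(\<lambda>x. (t * f x - g x)\<^sup>2) = (\<lambda>x. t\<^sup>2 * (f x)\<^sup>2 - (2 * t) * (f x * g x) + (g x)\<^sup>2)"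
    by (auto simp: power2_eq_square algebra_simps)
  also have "integral\<^sup>L M \<dots> = t\<^sup>2 * F - 2 * t * E + G"
    using f2 g2 fg by (simp add: F_def G_def E_def)
  also have "\<dots> = G - E\<^sup>2 / F"
    using pos by (simp add: t_def F_def[symmetric] power2_eq_square field_simps)
  finally show ?thesis
    using pos by (simp add: F_def[symmetric] G_def[symmetric] E_def[symmetric] field_simps)
qed

lemma (in finite_measure) measure_le_integral_exp:
  fixes v :: "'a \<Rightarrow> real"
  assumes "integrable M v" "integrable M (\<lambda>x. exp (v x))" "integral\<^sup>L M v = 0"
  shows "measure M (space M) \<le> integral\<^sup>L M (\<lambda>x. exp (v x))"
proof -
  have "measure M (space M) = integral\<^sup>L M (\<lambda>x. 1 + v x)"
    using assms(1,3) by simp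
  also have "\<dots> \<le> integral\<^sup>L M (\<lambda>x. exp (v x))"
    using assms(1,2) exp_ge_add_one_self by (intro integral_mono) auto
  finally show ?thesis .
qed

lemma (in finite_measure) square_integral_le:
  fixes f :: "'a \<Rightarrow> real"
  assumes "f \<in> borel_measurable M" "integrable M (\<lambda>x. (f x)\<^sup>2)"
    and "integral\<^sup>L M (\<lambda>x. (f x)\<^sup>2) > 0"
  shows "(integral\<^sup>L M f)\<^sup>2 \<le> integral\<^sup>L M (\<lambda>x. (f x)\<^sup>2) * measure M (space M)"
  using Cauchy_Schwarz_integral[of f M "\<lambda>_. 1"] assms by simp

lemma tint_exp_moments:
  assumes "lattice_basis om1 om2" "vortex_potential om1 om2 n p u" "dotW12 om1 om2 w"
    and J: "tint om1 om2 (\<lambda>x. exp (2 * u x + 2 * w x)) \<noteq> 0"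
  shows "tL2 om1 om2 (\<lambda>x. exp (u x + w x))"
    and "tint om1 om2 (\<lambda>x. exp (2 * u x + 2 * w x)) > 0"
    and "tarea om1 om2 \<le> tint om1 om2 (\<lambda>x. exp (2 * u x + 2 * w x))"
    and "(tint om1 om2 (\<lambda>x. exp (u x + w x)))\<^sup>2
           \<le> tint om1 om2 (\<lambda>x. exp (2 * u x + 2 * w x)) * tarea om1 om2"
proof -
  let ?M = "lebesgue_on (fund_dom om1 om2)"
  have D: "fund_dom om1 om2 \<in> lmeasurable"
    using assms(1) by (rule fund_dom_lmeasurable)
  interpret finite_measure ?M
    using D by (rule finite_measure_lebesgue_on)
  have area: "tarea om1 om2 = measure ?M (space ?M)"
    using D by (simp add: tarea_def measure_restrict_space)
  have u: "integrable ?M u" "integral\<^sup>L ?M u = 0"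
    using assms(2) by (auto simp: vortex_potential_def tL1_def tint_def)
  have w: "w \<in> borel_measurable ?M" "integrable ?M (\<lambda>x. (w x)\<^sup>2)" "integral\<^sup>L ?M w = 0"
    using assms(3) by (auto simp: dotW12_def W12_def tL2_def tint_def)
  have w_int: "integrable ?M w"
    using w(1,2) by (rule square_integrable_imp_integrable)
  have sq: "(\<lambda>x. (exp (u x + w x))\<^sup>2) = (\<lambda>x. exp (2 * u x + 2 * w x))"
    by (simp add: exp_double[symmetric] algebra_simps)
  \<comment> \<open>a non-integrable function has Bochner integral 0\<close>
  have J_int: "integrable ?M (\<lambda>x. exp (2 * u x + 2 * w x))"
    using J not_integrable_integral_eq unfolding tint_def by blast
  have meas: "(\<lambda>x. exp (u x + w x)) \<in> borel_measurable ?M"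
    using borel_measurable_integrable[OF u(1)] w(1) by measurable
  then show "tL2 om1 om2 (\<lambda>x. exp (u x + w x))"
    using J_int by (simp add: tL2_def sq)
  show "tarea om1 om2 \<le> tint om1 om2 (\<lambda>x. exp (2 * u x + 2 * w x))"
    unfolding area tint_def
    using J_int u w_int w(3)
    by (intro measure_le_integral_exp) auto
  show "tint om1 om2 (\<lambda>x. exp (2 * u x + 2 * w x)) > 0"
    using J by (simp add: tint_def order_less_le)
  then show "(tint om1 om2 (\<lambda>x. exp (u x + w x)))\<^sup>2
      \<le> tint om1 om2 (\<lambda>x. exp (2 * u x + 2 * w x)) * tarea om1 om2"
    using square_integral_le[OF meas] J_int by (simp add: area tint_def sq)
qed

text \<open>No sign condition on P^2 - c is needed, since sqrt is odd on the reals.\<close>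

lemma larger_root_le:
  fixes a J P c :: real
  assumes "a > 0" "J > 0" "c \<ge> 0" "P \<ge> 0"
  shows "a * J * ((P + sqrt (P\<^sup>2 - c)) / (2 * a * J)) \<le> P"
proof -
  have "sqrt (P\<^sup>2 - c) \<le> sqrt (P\<^sup>2)"
    using assms(3) by (intro real_sqrt_le_mono) simp
  then have "sqrt (P\<^sup>2 - c) \<le> P"
    using assms(4) by simp
  then show ?thesis
    using assms(1,2) by simp
qed

lemma ff1_le:
  assumes "N \<ge> 1" "\<kappa> > 1" "lam > 0" "b \<ge> 0" "I \<ge> 0" "J > 0" "E \<ge> 0" "Y \<ge> 0"
  shows "(real N - 1 + \<kappa>) * J * ff1 N \<kappa> lam b I J E Y \<le> real N * I + (\<kappa> - 1) * Y * E"
  unfolding ff1_def Let_def using assms by (intro larger_root_le) auto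

lemma ff2_le:
  assumes "N \<ge> 2" "\<kappa> > 1" "lam > 0" "b \<ge> 0" "I \<ge> 0" "J > 0" "E \<ge> 0" "X \<ge> 0"
  shows "(1 + (real N - 1) * \<kappa>) * J * ff2 N \<kappa> lam b I J E X
           \<le> real N * I + (real N - 1) * (\<kappa> - 1) * X * E"
proof -
  define n where "n = real N - 1"
  define Y where "Y = ff2 N \<kappa> lam b I J E X"
  have n: "n > 0" "real N = n + 1"
    using assms(1) by (auto simp: n_def)
  have "(1 / n + \<kappa>) * J * Y \<le> real N / n * I + (\<kappa> - 1) * X * E"
    unfolding Y_def ff2_def Let_def n_def using assms n
    by (intro larger_root_le) (auto simp: add_pos_pos)
  from mult_left_mono[OF this less_imp_le[OF n(1)]]
  have "n * ((1 / n + \<kappa>) * J * Y) \<le> n * (real N / n * I + (\<kappa> - 1) * X * E)" .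
  moreover have "n * ((1 / n + \<kappa>) * J * Y) = (1 + n * \<kappa>) * J * Y"
    using n by (simp add: field_simps)
  moreover have "n * (real N / n * I + (\<kappa> - 1) * X * E) = real N * I + n * (\<kappa> - 1) * X * E"
    using n by (simp add: field_simps)
  ultimately have "(1 + n * \<kappa>) * J * Y \<le> real N * I + n * (\<kappa> - 1) * X * E"
    by linarith
  then show ?thesis
    by (simp add: Y_def n_def)
qed

lemma sqrt_normalized_le:
  fixes a b c J J' A I E X Z :: real
  assumes H: "a * J * X \<le> b * I + c * Z * E" and abc: "a = b + c"
    and "b \<ge> 0" "c \<ge> 0" "Z \<ge> 0" "J > 0"
    and CI: "I\<^sup>2 \<le> J * A" and CE: "E\<^sup>2 \<le> J * J'"
  shows "a * (X * sqrt J - sqrt A) \<le> c * (Z * sqrt J' - sqrt A)"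
proof -
  have r: "sqrt J > 0" "sqrt J * sqrt J = J"
    using \<open>J > 0\<close> by auto
  have "I \<le> sqrt J * sqrt A"
    using real_sqrt_le_mono[OF CI] by (simp add: real_sqrt_mult)
  moreover have "E \<le> sqrt J * sqrt J'"
    using real_sqrt_le_mono[OF CE] by (simp add: real_sqrt_mult)
  ultimately have "b * I + c * Z * E \<le> b * (sqrt J * sqrt A) + c * Z * (sqrt J * sqrt J')"
    using \<open>b \<ge> 0\<close> \<open>c \<ge> 0\<close> \<open>Z \<ge> 0\<close> by (intro add_mono mult_left_mono) auto
  with H have "(a * X * sqrt J) * sqrt J \<le> (b * sqrt A + c * Z * sqrt J') * sqrt J"
    using r(2) by (simp add: algebra_simps)
  then have "a * X * sqrt J \<le> b * sqrt A + c * Z * sqrt J'"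
    using r(1) by (rule mult_right_le_imp_le)
  then show ?thesis
    using abc by (simp add: algebra_simps)
qed

lemma coupled_linear_nonpos:
  fixes n k P Q :: real
  assumes n: "n \<ge> 0" and k: "k > 1"
    and h1: "(n + k) * P \<le> (k - 1) * Q"
    and h2: "(1 + n * k) * Q \<le> n * (k - 1) * P"
  shows "P \<le> 0 \<and> Q \<le> 0"
proof -
  \<comment> \<open>the coefficient determinant (1 + n k)(n + k) - n (k - 1)^2 = k (n + 1)^2 is positive\<close>
  have P: "P \<le> 0"
  proof (rule ccontr)
    assume "\<not> P \<le> 0"
    then have "P > 0" by simp
    then have "(k - 1) * Q > 0"
      using h1 n k by (smt (verit) mult_pos_pos)
    then have "Q > 0"
      using k by (simp add: zero_less_mult_iff)
    have "(1 + n * k) * (n + k) * P * Q \<le> n * (k - 1) * P * ((n + k) * P)"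
      using mult_right_mono[OF h2, of "(n + k) * P"] \<open>P > 0\<close> n k by (simp add: algebra_simps)
    also have "\<dots> \<le> n * (k - 1) * P * ((k - 1) * Q)"
      using mult_left_mono[OF h1, of "n * (k - 1) * P"] \<open>P > 0\<close> n k by simp
    finally have "(1 + n * k) * (n + k) * (P * Q) \<le> n * (k - 1) * (k - 1) * (P * Q)"
      by (simp add: algebra_simps)
    then have "(1 + n * k) * (n + k) \<le> n * (k - 1) * (k - 1)"
      using \<open>P > 0\<close> \<open>Q > 0\<close> by simp
    moreover have "(1 + n * k) * (n + k) - n * (k - 1) * (k - 1) = k * (n + 1)\<^sup>2"
      by (simp add: power2_eq_square algebra_simps)
    ultimately show False
      using n k by (smt (verit) mult_pos_pos zero_less_power)
  qed
  have "(1 + n * k) * Q \<le> 0"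
    using h2 P n k by (smt (verit) mult_nonneg_nonpos mult_nonneg_nonneg)
  then have "Q \<le> 0"
    using n k by (smt (verit) mult_nonneg_nonneg zero_less_mult_iff)
  with P show ?thesis by simp
qed

lemma normalized_mean_bounds:
  fixes X J A I :: real
  assumes "X \<ge> 0" "J > 0" "X * sqrt J \<le> sqrt A" "I\<^sup>2 \<le> J * A" "A \<le> J"
  shows "X * I \<le> A \<and> X \<le> 1"
proof
  have "A \<ge> 0"
    using assms(2,4) by (smt (verit) mult_pos_neg zero_le_power2)
  have "X * I \<le> X * (sqrt J * sqrt A)"
    using real_sqrt_le_mono[OF assms(4)] assms(1) by (intro mult_left_mono) (simp_all add: real_sqrt_mult)
  also have "\<dots> \<le> sqrt A * sqrt A"
    using mult_right_mono[OF assms(3), of "sqrt A"] \<open>A \<ge> 0\<close> by (simp add: mult.assoc)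
  finally show "X * I \<le> A"
    using \<open>A \<ge> 0\<close> by simp
  have "X * sqrt J \<le> 1 * sqrt J"
    using assms(3) real_sqrt_le_mono[OF assms(5)] by linarith
  then show "X \<le> 1"
    using assms(2) by (simp add: mult_le_cancel_right_pos)
qed

lemma coupled_bounds:
  fixes N k X Y J1 J2 A I1 I2 E :: real
  assumes "N \<ge> 1" "k > 1" "X \<ge> 0" "Y \<ge> 0" "J1 > 0" "J2 > 0"
    and H1: "(N - 1 + k) * J1 * X \<le> N * I1 + (k - 1) * Y * E"
    and H2: "(1 + (N - 1) * k) * J2 * Y \<le> N * I2 + (N - 1) * (k - 1) * X * E"
    and C1: "I1\<^sup>2 \<le> J1 * A" and C2: "I2\<^sup>2 \<le> J2 * A" and CE: "E\<^sup>2 \<le> J1 * J2"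
    and "A \<le> J1" "A \<le> J2"
  shows "X * I1 \<le> A \<and> X \<le> 1 \<and> Y * I2 \<le> A \<and> Y \<le> 1"
proof -
  have "(N - 1 + k) * (X * sqrt J1 - sqrt A) \<le> (k - 1) * (Y * sqrt J2 - sqrt A)"
    using assms by (intro sqrt_normalized_le[OF H1 _ _ _ _ _ C1 CE]) auto
  moreover have "(1 + (N - 1) * k) * (Y * sqrt J2 - sqrt A)
                   \<le> (N - 1) * (k - 1) * (X * sqrt J1 - sqrt A)"
  proof (rule sqrt_normalized_le[OF H2 _ _ _ _ _ C2])
    show "1 + (N - 1) * k = N + (N - 1) * (k - 1)"
      by (simp add: algebra_simps)
    show "E\<^sup>2 \<le> J2 * J1"
      using CE by (simp add: mult.commute)
  qed (use assms in auto)
  ultimately have "X * sqrt J1 - sqrt A \<le> 0 \<and> Y * sqrt J2 - sqrt A \<le> 0"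
    using assms(1,2) by (intro coupled_linear_nonpos[of "N - 1" k]) auto
  then have "X * sqrt J1 \<le> sqrt A" "Y * sqrt J2 \<le> sqrt A"
    by auto
  then show ?thesis
    using normalized_mean_bounds assms by blast
qed

theorem lemma2:
  fixes N n1 n2 :: nat and \<kappa> lam c1 c2 :: real and om1 om2 :: "real \<times> real"
    and p1 p2 :: "nat \<Rightarrow> real \<times> real" and u10 u20 w1 w2 :: "real \<times> real \<Rightarrow> real"
  assumes "N \<ge> 2" and "\<kappa> > 1" and "lam > 0"
    and "lattice_basis om1 om2"
    and "\<forall>s\<in>{1..n1}. p1 s \<in> fund_dom om1 om2"
    and "\<forall>s\<in>{1..n2}. p2 s \<in> fund_dom om1 om2"
    and "vortex_potential om1 om2 n1 p1 u10"
    and "vortex_potential om1 om2 n2 p2 u20"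
    and "dotW12 om1 om2 w1" and "dotW12 om1 om2 w2"
    and "(tint om1 om2 (\<lambda>x. exp (u10 x + w1 x)))\<^sup>2 \<ge>
           4 * (real N - 1 + \<kappa>) * bb1 N \<kappa> n1 n2 / ((real N)\<^sup>2 * lam)
             * tint om1 om2 (\<lambda>x. exp (2 * u10 x + 2 * w1 x))"
    and "(tint om1 om2 (\<lambda>x. exp (u20 x + w2 x)))\<^sup>2 \<ge>
           4 * (real N - 1) * (1 + (real N - 1) * \<kappa>) * bb2 N \<kappa> n1 n2 / ((real N)\<^sup>2 * lam)
             * tint om1 om2 (\<lambda>x. exp (2 * u20 x + 2 * w2 x))"
    and "exp c1 = ff1 N \<kappa> lam (bb1 N \<kappa> n1 n2)
           (tint om1 om2 (\<lambda>x. exp (u10 x + w1 x)))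
           (tint om1 om2 (\<lambda>x. exp (2 * u10 x + 2 * w1 x)))
           (tint om1 om2 (\<lambda>x. exp (u10 x + u20 x + w1 x + w2 x))) (exp c2)"
    and "exp c2 = ff2 N \<kappa> lam (bb2 N \<kappa> n1 n2)
           (tint om1 om2 (\<lambda>x. exp (u20 x + w2 x)))
           (tint om1 om2 (\<lambda>x. exp (2 * u20 x + 2 * w2 x)))
           (tint om1 om2 (\<lambda>x. exp (u10 x + u20 x + w1 x + w2 x))) (exp c1)"
  shows "exp c1 * tint om1 om2 (\<lambda>x. exp (u10 x + w1 x)) \<le> tarea om1 om2 \<and> exp c1 \<le> 1 \<and>
         exp c2 * tint om1 om2 (\<lambda>x. exp (u20 x + w2 x)) \<le> tarea om1 om2 \<and> exp c2 \<le> 1"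
proof -
  let ?I1 = "tint om1 om2 (\<lambda>x. exp (u10 x + w1 x))"
  let ?I2 = "tint om1 om2 (\<lambda>x. exp (u20 x + w2 x))"
  let ?J1 = "tint om1 om2 (\<lambda>x. exp (2 * u10 x + 2 * w1 x))"
  let ?J2 = "tint om1 om2 (\<lambda>x. exp (2 * u20 x + 2 * w2 x))"
  let ?E = "tint om1 om2 (\<lambda>x. exp (u10 x + u20 x + w1 x + w2 x))"
  \<comment> \<open>f_i divides by J_i, and division by zero would give e^c_i = 0\<close>
  have "?J1 \<noteq> 0" "?J2 \<noteq> 0"
    using assms(13,14) exp_gt_zero[of c1] exp_gt_zero[of c2] by (auto simp: ff1_def ff2_def)
  note m1 = tint_exp_moments[OF assms(4,7,9) \<open>?J1 \<noteq> 0\<close>]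
   and m2 = tint_exp_moments[OF assms(4,8,10) \<open>?J2 \<noteq> 0\<close>]
  have nonneg: "?I1 \<ge> 0" "?I2 \<ge> 0" "?E \<ge> 0" "bb1 N \<kappa> n1 n2 \<ge> 0" "bb2 N \<kappa> n1 n2 \<ge> 0"
    using assms(1,2) by (simp_all add: tint_def bb1_def bb2_def)
  have "?E\<^sup>2 \<le> ?J1 * ?J2"
    using Cauchy_Schwarz_integral[of "\<lambda>x. exp (u10 x + w1 x)" _ "\<lambda>x. exp (u20 x + w2 x)"]
      m1(1,2) m2(1)
    by (simp add: tL2_def tint_def power2_eq_square add_ac flip: exp_add)
  moreover have "(real N - 1 + \<kappa>) * ?J1 * exp c1 \<le> real N * ?I1 + (\<kappa> - 1) * exp c2 * ?E"
    unfolding assms(13) using assms(1-3) m1(2) nonneg by (intro ff1_le) auto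
  moreover have "(1 + (real N - 1) * \<kappa>) * ?J2 * exp c2
                   \<le> real N * ?I2 + (real N - 1) * (\<kappa> - 1) * exp c1 * ?E"
    unfolding assms(14) using assms(1-3) m2(2) nonneg by (intro ff2_le) auto
  ultimately show ?thesis
    using coupled_bounds[of "real N" \<kappa> "exp c1" "exp c2" ?J1 ?J2] assms(1,2) m1(2-4) m2(2-4)
    by auto
qed

end
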